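(* Let $H_X\in\mathbb{F}_2^{m_X\times n}$ and $H_Z\in\mathbb{F}_2^{m_Z\times n}$ satisfy $H_XH_Z^{\mathsf T}=0$ over $\mathbb{F}_2$. Let $P\ge1$ and consider a CPM $P$ lift specified by shifts $s^X_{x,c}\in\mathbb{Z}_P$ for each nonzero entry $(x,c)$ of $H_X$ and $s^Z_{z,c}\in\mathbb{Z}_P$ for each nonzero entry $(z,c)$ of $H_Z$. Suppose there are a row $z$ of $H_Z$, four distinct rows $x_0,x_1,x_2,x_3$ of $H_X$, and four distinct columns $c_0,c_1,c_2,c_3$ such that, with indices modulo $4$, \[ \{c_{a-1},c_a\}\subseteq \mathrm{supp}(x_a)\cap\mathrm{supp}(z)\qquad(a=0,1,2,3). \] Then the Tanner graph of $H_X$ contains the 8-cycle $x_0-c_0-x_1-c_1-x_2-c_2-x_3-c_3-x_0$. Assume moreover that for each $a\in\{0,1,2,3\}$ the shifts satisfy the CSS zero constraint for the pair $(x_a,z)$ with the pair of shared columns $(c_{a-1},c_a)$, namely \[ s^X_{x_a,c_{a-1}}-s^Z_{z,c_{a-1}}-s^X_{x_a,c_a}+s^Z_{z,c_a}\equiv 0\pmod P \] (this is the case, in particular, when $\mathrm{supp}(x_a)\cap\mathrm{supp}(z)=\{c_{a-1},c_a\}$ and the lift satisfies the CSS zero constraints). Then the voltage of this 8-cycle is $0\pmod P$, and hence the cycle lifts to closed 8-cycles in every such CPM $P$ lift. The same statement holds with the roles of $X$ and $Z$ interchanged.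
   Context: The Tanner graph of a binary matrix $H$ is the bipartite graph with check nodes = rows, variable nodes = columns, and an edge $(r,c)$ iff $H_{rc}=1$; $\mathrm{supp}(x)$ denotes the set of columns where row $x$ is nonzero. A CPM $P$ lift replaces each nonzero entry $(r,c)$ with assigned shift $t\in\mathbb{Z}_P$ by the $P\times P$ circulant permutation matrix equal to the identity cyclically shifted by $t$, and each zero entry by the $P\times P$ zero block. CSS zero constraints: for every row $x$ of $H_X$ and row $z$ of $H_Z$, the (even-size) set of shared columns is partitioned into pairs, and for each pair $\{c,c'\}$ one imposes $s^X_{x,c}-s^Z_{z,c}-s^X_{x,c'}+s^Z_{z,c'}\equiv0\pmod P$; these guarantee the lifted matrices satisfy $\hat H_X\hat H_Z^{\mathsf T}=0$. The voltage of a Tanner cycle $r_0-c_0-r_1-c_1-\dots-r_{L-1}-c_{L-1}-r_0$ is the alternating signed sum of the shifts of its edges, $\sum_{a}(s_{r_a,c_{a-1}}-s_{r_a,c_a})$ (up to overall sign/orientation); a base cycle lifts to a closed cycle of the same length iff its voltage is $0\bmod P$. *)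

theory Defs
  imports Main "HOL-Library.Z2" "HOL-Number_Theory.Cong"
begin

definition supp :: "('r \<Rightarrow> 'c \<Rightarrow> bit) \<Rightarrow> 'c set \<Rightarrow> 'r \<Rightarrow> 'c set" where
  "supp H C x = {c \<in> C. H x c \<noteq> 0}"

text \<open>A closed cycle r_0 - c_0 - r_1 - c_1 - ... - r_(L-1) - c_(L-1) - r_0 in the
  Tanner graph of H (check nodes = rows in R, variable nodes = columns in C):
  all vertices distinct and in range, and edges (r_a, c_(a-1)), (r_a, c_a) present
  (indices mod L).\<close>
definition tanner_cycle ::
  "('r \<Rightarrow> 'c \<Rightarrow> bit) \<Rightarrow> 'r set \<Rightarrow> 'c set \<Rightarrow> nat \<Rightarrow> (nat \<Rightarrow> 'r) \<Rightarrow> (nat \<Rightarrow> 'c) \<Rightarrow> bool" where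
  "tanner_cycle H R C L r c \<longleftrightarrow>
     inj_on r {..<L} \<and> inj_on c {..<L} \<and>
     (\<forall>a<L. r a \<in> R \<and> c a \<in> C \<and>
        H (r a) (c ((a + L - 1) mod L)) \<noteq> 0 \<and> H (r a) (c a) \<noteq> 0)"

definition voltage :: "('r \<Rightarrow> 'c \<Rightarrow> int) \<Rightarrow> nat \<Rightarrow> (nat \<Rightarrow> 'r) \<Rightarrow> (nat \<Rightarrow> 'c) \<Rightarrow> int" where
  "voltage s L r c = (\<Sum>a<L. s (r a) (c ((a + L - 1) mod L)) - s (r a) (c a))"

text \<open>CPM P lift: block (r,c) is the P x P identity cyclically shifted by s r c
  if H r c is nonzero, and the zero block otherwise. Row (r,i), column (c,j).\<close>
definition cpm_lift :: "(nat \<Rightarrow> nat \<Rightarrow> bit) \<Rightarrow> (nat \<Rightarrow> nat \<Rightarrow> int) \<Rightarrow> nat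
    \<Rightarrow> nat \<times> nat \<Rightarrow> nat \<times> nat \<Rightarrow> bit" where
  "cpm_lift H s P = (\<lambda>(r, i) (c, j).
     if H r c \<noteq> 0 \<and> i < P \<and> j < P \<and> int j = (int i + s r c) mod int P then 1 else 0)"

definition orthogonal :: "nat \<Rightarrow> nat \<Rightarrow> nat \<Rightarrow> (nat \<Rightarrow> nat \<Rightarrow> bit) \<Rightarrow> (nat \<Rightarrow> nat \<Rightarrow> bit) \<Rightarrow> bool" where
  "orthogonal mX mZ n HX HZ \<longleftrightarrow> (\<forall>x<mX. \<forall>z<mZ. (\<Sum>c<n. HX x c * HZ z c) = 0)"

text \<open>The claim for one orientation: H_A plays the role of H_X (four rows r_a),
  H_B the role of H_Z (one row z).\<close>
definition eight_cycle_claim ::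
  "nat \<Rightarrow> nat \<Rightarrow> nat \<Rightarrow> (nat \<Rightarrow> nat \<Rightarrow> bit) \<Rightarrow> (nat \<Rightarrow> nat \<Rightarrow> bit)
    \<Rightarrow> (nat \<Rightarrow> nat \<Rightarrow> int) \<Rightarrow> (nat \<Rightarrow> nat \<Rightarrow> int) \<Rightarrow> nat \<Rightarrow> bool" where
  "eight_cycle_claim mA mB n HA HB sA sB P \<longleftrightarrow>
    (\<forall>z r c.
      z < mB \<and> (\<forall>a<4. r a < mA) \<and> inj_on r {..<4} \<and>
      (\<forall>a<4. c a < n) \<and> inj_on c {..<4} \<and>
      (\<forall>a<4. {c ((a + 3) mod 4), c a} \<subseteq> supp HA {..<n} (r a) \<inter> supp HB {..<n} z)
      \<longrightarrow>
      tanner_cycle HA {..<mA} {..<n} 4 r c \<and>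
      ((\<forall>a<4. [sA (r a) (c ((a + 3) mod 4)) - sB z (c ((a + 3) mod 4))
               - sA (r a) (c a) + sB z (c a) = 0] (mod int P))
       \<longrightarrow>
        [voltage sA 4 r c = 0] (mod int P) \<and>
        (\<forall>i<P. \<exists>r' c'. (\<forall>a<4. fst (r' a) = r a \<and> fst (c' a) = c a) \<and>
            snd (r' 0) = i \<and>
            tanner_cycle (cpm_lift HA sA P) ({..<mA} \<times> {..<P}) ({..<n} \<times> {..<P}) 4 r' c')))"

end

theory Submission
  imports Defs
begin

text \<open>Telescoping along the cycle: each CSS zero constraint for the pair (r_a, z) is the
  contribution of r_a to the voltage plus a difference of two shifts of the row z, and
  these differences cancel around the cycle. For the lift, start at level i on r_0 and
  follow the CPM edges; the level reached on r_a is i minus the voltage of the path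
  r_0 - c_0 - ... - r_a, and the walk closes up exactly because the full voltage vanishes
  modulo P.\<close>

lemma Suc_add_mod_Suc: "b < Suc m \<Longrightarrow> Suc (b + m) mod Suc m = b"
  by (metis add_Suc_right mod_add_self2 mod_less)

lemma sum_lessThan_cyclic_pred:
  fixes L :: nat
  shows "(\<Sum>a<L. f ((a + L - 1) mod L)) = (\<Sum>a<L. f a :: 'a :: comm_monoid_add)"
proof (cases L)
  case (Suc m)
  have "(\<Sum>a<Suc m. f ((a + m) mod Suc m)) = f m + (\<Sum>b<m. f b)"
    by (subst sum.lessThan_Suc_shift) (simp add: Suc_add_mod_Suc)
  then show ?thesis
    by (simp add: Suc sum.lessThan_Suc add.commute)
qed simp

lemma voltage_cong_0_if_css_constraints:
  assumes "\<forall>a<L. [sA (r a) (c ((a + L - 1) mod L)) - sB z (c ((a + L - 1) mod L))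
                 - sA (r a) (c a) + sB z (c a) = 0] (mod m)"
  shows "[voltage sA L r c = 0] (mod m)"
proof -
  have "voltage sA L r c
      = (\<Sum>a<L. sA (r a) (c ((a + L - 1) mod L)) - sB z (c ((a + L - 1) mod L))
                 - sA (r a) (c a) + sB z (c a))"
    using sum_lessThan_cyclic_pred[of "\<lambda>b. sB z (c b)" L]
    by (simp add: voltage_def sum.distrib sum_subtractf)
  also have "[\<dots> = (\<Sum>a<L. 0)] (mod m)"
    using assms by (intro cong_sum) simp
  finally show ?thesis by simp
qed

definition path_voltage :: "('r \<Rightarrow> 'c \<Rightarrow> int) \<Rightarrow> (nat \<Rightarrow> 'r) \<Rightarrow> (nat \<Rightarrow> 'c) \<Rightarrow> nat \<Rightarrow> int" where
  "path_voltage s r c k = (\<Sum>b<k. s (r (Suc b)) (c b) - s (r b) (c b))"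

lemma path_voltage_Suc:
  "path_voltage s r c (Suc k) = path_voltage s r c k + s (r (Suc k)) (c k) - s (r k) (c k)"
  by (simp add: path_voltage_def)

lemma voltage_eq_closed_path_voltage:
  "voltage s (Suc m) r c = path_voltage s r c m + s (r 0) (c m) - s (r m) (c m)"
proof -
  have "(\<Sum>a<Suc m. s (r a) (c ((a + Suc m - 1) mod Suc m)))
      = (\<Sum>b<m. s (r (Suc b)) (c b)) + s (r 0) (c m)"
    by (subst sum.lessThan_Suc_shift) (simp add: Suc_add_mod_Suc)
  then show ?thesis
    by (simp add: voltage_def path_voltage_def sum_subtractf sum.lessThan_Suc)
qed

lemma tanner_cycle_if_edges_in_supp:
  assumes "inj_on r {..<L}" "inj_on c {..<L}" "\<forall>a<L. r a \<in> R"
    and "\<forall>a<L. {c ((a + L - 1) mod L), c a} \<subseteq> supp H C (r a)"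
  shows "tanner_cycle H R C L r c"
  using assms by (auto simp: tanner_cycle_def supp_def)

lemma cpm_lift_edge:
  assumes "H r c \<noteq> 0" "0 < P" "[y = x + s r c] (mod int P)"
  shows "cpm_lift H s P (r, nat (x mod int P)) (c, nat (y mod int P)) \<noteq> 0"
  using assms by (simp add: cpm_lift_def cong_def nat_less_iff mod_add_left_eq)

lemma tanner_cycle_cpm_lift:
  assumes cycle: "tanner_cycle H R C L r c"
    and volt: "[voltage s L r c = 0] (mod int P)"
    and "i < P"
  shows "\<exists>r' c'. (\<forall>a<L. fst (r' a) = r a \<and> fst (c' a) = c a) \<and> snd (r' 0) = i \<and>
           tanner_cycle (cpm_lift H s P) (R \<times> {..<P}) (C \<times> {..<P}) L r' c'"
proof -
  have P: "0 < P" using \<open>i < P\<close> by simp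
  define x where "x a = int i - path_voltage s r c a" for a
  define y where "y a = x a + s (r a) (c a)" for a
  define r' where "r' a = (r a, nat (x a mod int P))" for a
  define c' where "c' a = (c a, nat (y a mod int P))" for a
  have back_edge: "cpm_lift H s P (r' a) (c' ((a + L - 1) mod L)) \<noteq> 0" if "a < L" for a
  proof (cases a)
    case 0
    with that obtain m where L: "L = Suc m" by (cases L) auto
    have "y m = x 0 + s (r 0) (c m) - voltage s L r c"
      unfolding L voltage_eq_closed_path_voltage by (simp add: x_def y_def path_voltage_def)
    then have "[y m = x 0 + s (r 0) (c m)] (mod int P)"
      using volt by (metis cong_diff cong_refl diff_zero)
    moreover have "H (r 0) (c m) \<noteq> 0"
      using cycle L by (auto simp: tanner_cycle_def)
    ultimately show ?thesis
      using 0 L P by (simp add: r'_def c'_def cpm_lift_edge)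
  next
    case (Suc b)
    then have prev: "(a + L - 1) mod L = b" using that by simp
    have "H (r a) (c b) \<noteq> 0"
      using cycle that prev by (auto simp: tanner_cycle_def)
    moreover have "[y b = x a + s (r a) (c b)] (mod int P)"
      by (simp add: Suc x_def y_def path_voltage_Suc algebra_simps)
    ultimately show ?thesis
      unfolding prev r'_def c'_def by (rule cpm_lift_edge[OF _ P])
  qed
  have forward_edge: "cpm_lift H s P (r' a) (c' a) \<noteq> 0" if "a < L" for a
  proof -
    have "H (r a) (c a) \<noteq> 0"
      using cycle that by (auto simp: tanner_cycle_def)
    then show ?thesis
      unfolding r'_def c'_def y_def by (rule cpm_lift_edge[OF _ P cong_refl])
  qed
  have "fst \<circ> r' = r" "fst \<circ> c' = c"
    by (auto simp: r'_def c'_def)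
  then have "inj_on r' {..<L}" "inj_on c' {..<L}"
    using cycle by (metis inj_on_imageI2 tanner_cycle_def)+
  moreover have "r' a \<in> R \<times> {..<P}" "c' a \<in> C \<times> {..<P}" if "a < L" for a
    using cycle that P by (auto simp: tanner_cycle_def r'_def c'_def nat_less_iff)
  ultimately have "tanner_cycle (cpm_lift H s P) (R \<times> {..<P}) (C \<times> {..<P}) L r' c'"
    using back_edge forward_edge by (simp add: tanner_cycle_def)
  moreover have "snd (r' 0) = i"
    using \<open>i < P\<close> by (simp add: r'_def x_def path_voltage_def)
  ultimately show ?thesis
    by (intro exI[of _ r'] exI[of _ c']) (simp add: r'_def c'_def)
qed

lemma eight_cycle_claim_holds: "eight_cycle_claim mA mB n HA HB sA sB P"
  unfolding eight_cycle_claim_def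
proof (intro allI impI conjI)
  fix z and r c :: "nat \<Rightarrow> nat"
  assume "z < mB \<and> (\<forall>a<4. r a < mA) \<and> inj_on r {..<4} \<and> (\<forall>a<4. c a < n) \<and> inj_on c {..<4} \<and>
    (\<forall>a<4. {c ((a + 3) mod 4), c a} \<subseteq> supp HA {..<n} (r a) \<inter> supp HB {..<n} z)"
  then show cycle: "tanner_cycle HA {..<mA} {..<n} 4 r c"
    by (intro tanner_cycle_if_edges_in_supp) (auto simp: add.commute)
  assume "\<forall>a<4. [sA (r a) (c ((a + 3) mod 4)) - sB z (c ((a + 3) mod 4))
             - sA (r a) (c a) + sB z (c a) = 0] (mod int P)"
  then show volt: "[voltage sA 4 r c = 0] (mod int P)"
    by (intro voltage_cong_0_if_css_constraints[where sB = sB and z = z]) (simp add: add.commute)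
  show "\<exists>r' c'. (\<forall>a<4. fst (r' a) = r a \<and> fst (c' a) = c a) \<and> snd (r' 0) = i \<and>
          tanner_cycle (cpm_lift HA sA P) ({..<mA} \<times> {..<P}) ({..<n} \<times> {..<P}) 4 r' c'"
    if "i < P" for i
    using tanner_cycle_cpm_lift[OF cycle volt that] .
qed

theorem mainTheorem3:
  fixes mX mZ n P :: nat
    and HX HZ :: "nat \<Rightarrow> nat \<Rightarrow> bit"
    and sX sZ :: "nat \<Rightarrow> nat \<Rightarrow> int"
  assumes "orthogonal mX mZ n HX HZ"
    and "P \<ge> 1"
  shows "eight_cycle_claim mX mZ n HX HZ sX sZ P \<and> eight_cycle_claim mZ mX n HZ HX sZ sX P"
  by (simp add: eight_cycle_claim_holds)

end
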